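(* Let $X^{\mathrm{aff}}$ be one of the affine extensions $A_4^=$, $D_6^>$, $D_6^=$, $D_6^<$, with extended Cartan matrix $A^{\mathrm{aff}}=(A^{\mathrm{aff}}_{ij})_{0\le i,j\le n}$, simple roots $\alpha_1,\dots,\alpha_n$ (a basis of $V_n$), affine root $\alpha_0\in V_n$, and projection $\pi\in\{\pi_\parallel,\pi_\perp\}$ as in the context. Let $\rho$ be any Dynkin diagram automorphism of $X^{\mathrm{aff}}$, i.e. a permutation of $\{0,1,\dots,n\}$ with $A^{\mathrm{aff}}_{\rho(i)\rho(j)}=A^{\mathrm{aff}}_{ij}$ for all $i,j$ (this includes the automorphisms of the unextended diagrams $A_4$ and $D_6$, extended by $\rho(0)=0$). Then $\alpha_{\rho(1)},\dots,\alpha_{\rho(n)}$ is a basis of $V_n$; if $\pi^\rho:V_n\to\mathbb{R}^m$ denotes the linear map with $\pi^\rho(\alpha_{\rho(i)})=\pi(\alpha_i)$ for $i=1,\dots,n$, then $\pi^\rho(\alpha_{\rho(0)})=\pi(\alpha_0)$. Consequently the induced affine root, and hence the induced Cartan matrix $\hat A_{ij}=2(a_i\mid a_j)/(a_i\mid a_i)$ ($a_0$ the induced affine root, $a_1,\dots,a_m$ the simple roots of $H_m$), is the same whether the projection $\pi$ or the automorphism-twisted projection $\pi^\rho$ is used.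
   Context: Let $\tau=\tfrac12(1+\sqrt5)$, $\sigma=\tfrac12(1-\sqrt5)$. $V_n$ is a real vector space with basis $\alpha_1,\dots,\alpha_n$. Labelling: $A_4$: chain $\alpha_1-\alpha_2-\alpha_3-\alpha_4$; $D_6$: chain $\alpha_1-\cdots-\alpha_5$ with $\alpha_6$ joined to $\alpha_4$. The Cartan matrix of a simply-laced diagram has $A_{ii}=2$, $A_{ij}=-1$ if nodes $i,j$ are joined and $0$ otherwise. Extended Cartan matrices (indices $0,\dots,n$): $A_4^=$: the simply-laced cycle $0-1-2-3-4-0$; $D_6^=$: the $D_6$ diagram with node $0$ joined to node $2$ (simply laced); $D_6^<$: the $D_6$ Cartan matrix extended by node $0$ with $A_{01}=-2$, $A_{10}=-1$, $A_{0j}=A_{j0}=0$ for $j\ge2$; $D_6^>$: same but $A_{01}=-1$, $A_{10}=-2$. Affine roots in $V_n$: $A_4^=$: $-\alpha_0=\alpha_1+\alpha_2+\alpha_3+\alpha_4$; $D_6^=$: $-\alpha_0=\alpha_1+2\alpha_2+2\alpha_3+2\alpha_4+\alpha_5+\alpha_6$; $D_6^<$: $-\alpha_0=\alpha_1+\alpha_2+\alpha_3+\alpha_4+\tfrac12\alpha_5+\tfrac12\alpha_6$; $D_6^>$: $-\alpha_0=2\alpha_1+2\alpha_2+2\alpha_3+2\alpha_4+\alpha_5+\alpha_6$. Target: for $H_3$ ($m=3$), vectors $a_1,a_2,a_3\in\mathbb{R}^3$ with $(a_i\mid a_i)=1$, $(a_1\mid a_2)=-\tfrac12$, $(a_2\mid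 a_3)=-\tfrac\tau2$, $(a_1\mid a_3)=0$; for $H_2$ ($m=2$), $a_1,a_2\in\mathbb{R}^2$ with $(a_i\mid a_i)=1$, $(a_1\mid a_2)=-\tfrac\tau2$. Vectors $\bar a_i$ are defined likewise with $\tau$ replaced by $\sigma$. Projections: $\pi_\parallel:V_6\to\mathbb{R}^3$ ($D_6\to H_3$) by $\alpha_1\mapsto a_1$, $\alpha_2\mapsto a_2$, $\alpha_3\mapsto\tau a_3$, $\alpha_4\mapsto\tau a_2$, $\alpha_5\mapsto\tau a_1$, $\alpha_6\mapsto a_3$; $\pi_\parallel:V_4\to\mathbb{R}^2$ ($A_4\to H_2$) by $\alpha_1\mapsto a_1$, $\alpha_2\mapsto\tau a_2$, $\alpha_3\mapsto\tau a_1$, $\alpha_4\mapsto a_2$. $\pi_\perp$ is given by the same formulas with $\tau\to\sigma$ and $a_i\to\bar a_i$. The induced affine root is $\pi(\alpha_0)$. *)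

theory Defs
  imports "HOL-Analysis.Analysis"
begin

definition tau :: real where "tau = (1 + sqrt 5) / 2"
definition sig :: real where "sig = (1 - sqrt 5) / 2"

definition sl_cartan :: "(nat \<Rightarrow> nat \<Rightarrow> bool) \<Rightarrow> nat \<Rightarrow> nat \<Rightarrow> real" where
  "sl_cartan E i j = (if i = j then 2 else if E i j \<or> E j i then -1 else 0)"

definition edgeA4 :: "nat \<Rightarrow> nat \<Rightarrow> bool" where
  "edgeA4 i j \<longleftrightarrow> (i, j) \<in> {(1,2),(2,3),(3,4)}"
definition edgeD6 :: "nat \<Rightarrow> nat \<Rightarrow> bool" where
  "edgeD6 i j \<longleftrightarrow> (i, j) \<in> {(1,2),(2,3),(3,4),(4,5),(4,6)}"

definition cartan_A4_eq :: "nat \<Rightarrow> nat \<Rightarrow> real" where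
  "cartan_A4_eq = sl_cartan (\<lambda>i j. edgeA4 i j \<or> (i, j) \<in> {(0,1),(4,0)})"
definition cartan_D6_eq :: "nat \<Rightarrow> nat \<Rightarrow> real" where
  "cartan_D6_eq = sl_cartan (\<lambda>i j. edgeD6 i j \<or> (i, j) = (0,2))"
definition cartan_D6_lt :: "nat \<Rightarrow> nat \<Rightarrow> real" where
  "cartan_D6_lt i j = (if (i, j) = (0,1) then -2 else if (i, j) = (1,0) then -1
                       else sl_cartan edgeD6 i j)"
definition cartan_D6_gt :: "nat \<Rightarrow> nat \<Rightarrow> real" where
  "cartan_D6_gt i j = (if (i, j) = (0,1) then -1 else if (i, j) = (1,0) then -2
                       else sl_cartan edgeD6 i j)"

text \<open>Coefficients c with  -alpha_0 = sum_{j=1..n} c_j alpha_j.\<close>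
definition coef_A4_eq :: "nat \<Rightarrow> real" where
  "coef_A4_eq j = (if j \<in> {1..4} then 1 else 0)"
definition coef_D6_eq :: "nat \<Rightarrow> real" where
  "coef_D6_eq j = (if j \<in> {1,5,6} then 1 else if j \<in> {2,3,4} then 2 else 0)"
definition coef_D6_lt :: "nat \<Rightarrow> real" where
  "coef_D6_lt j = (if j \<in> {1..4} then 1 else if j \<in> {5,6} then 1/2 else 0)"
definition coef_D6_gt :: "nat \<Rightarrow> real" where
  "coef_D6_gt j = (if j \<in> {1..4} then 2 else if j \<in> {5,6} then 1 else 0)"

definition ext_root :: "nat \<Rightarrow> (nat \<Rightarrow> real) \<Rightarrow> (nat \<Rightarrow> 'v::real_vector) \<Rightarrow> nat \<Rightarrow> 'v" where
  "ext_root n c \<alpha> i = (if i = 0 then - (\<Sum>j=1..n. c j *\<^sub>R \<alpha> j) else \<alpha> i)"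

text \<open>Images of the simple roots under the projections (t = tau or sigma, a = target roots).\<close>
definition img_D6 :: "real \<Rightarrow> (nat \<Rightarrow> 'w::real_vector) \<Rightarrow> nat \<Rightarrow> 'w" where
  "img_D6 t a i = (if i = 1 then a 1 else if i = 2 then a 2 else if i = 3 then t *\<^sub>R a 3
     else if i = 4 then t *\<^sub>R a 2 else if i = 5 then t *\<^sub>R a 1 else if i = 6 then a 3 else 0)"
definition img_A4 :: "real \<Rightarrow> (nat \<Rightarrow> 'w::real_vector) \<Rightarrow> nat \<Rightarrow> 'w" where
  "img_A4 t a i = (if i = 1 then a 1 else if i = 2 then t *\<^sub>R a 2 else if i = 3 then t *\<^sub>R a 1
     else if i = 4 then a 2 else 0)"

definition dynkin_aut :: "nat \<Rightarrow> (nat \<Rightarrow> nat \<Rightarrow> real) \<Rightarrow> (nat \<Rightarrow> nat) \<Rightarrow> bool" where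
  "dynkin_aut n A \<rho> \<longleftrightarrow> bij_betw \<rho> {0..n} {0..n} \<and>
     (\<forall>i\<in>{0..n}. \<forall>j\<in>{0..n}. A (\<rho> i) (\<rho> j) = A i j)"

definition induced_cartan :: "(nat \<Rightarrow> 'w::real_inner) \<Rightarrow> 'w \<Rightarrow> nat \<Rightarrow> nat \<Rightarrow> real" where
  "induced_cartan a a0 i j =
     (let b = (\<lambda>k. if k = 0 then a0 else a k) in 2 * inner (b i) (b j) / inner (b i) (b i))"

text \<open>The claim of the theorem for one extended diagram (n, A, c), one basis alpha of V_n,
  one projection (given by the images img i of alpha_i) and target simple roots a_1..a_m.\<close>
definition twist_claim :: "nat \<Rightarrow> (nat \<Rightarrow> nat \<Rightarrow> real) \<Rightarrow> (nat \<Rightarrow> real) \<Rightarrow> (nat \<Rightarrow> 'v::real_vector)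
    \<Rightarrow> (nat \<Rightarrow> 'w::real_inner) \<Rightarrow> nat \<Rightarrow> (nat \<Rightarrow> 'w) \<Rightarrow> bool" where
  "twist_claim n A c \<alpha> img m a \<longleftrightarrow>
    (\<forall>\<rho>. dynkin_aut n A \<rho> \<longrightarrow>
      inj_on (ext_root n c \<alpha> \<circ> \<rho>) {1..n} \<and>
      independent ((ext_root n c \<alpha> \<circ> \<rho>) ` {1..n}) \<and>
      span ((ext_root n c \<alpha> \<circ> \<rho>) ` {1..n}) = UNIV \<and>
      (\<forall>p f. linear p \<and> (\<forall>i\<in>{1..n}. p (\<alpha> i) = img i) \<and>
             linear f \<and> (\<forall>i\<in>{1..n}. f (ext_root n c \<alpha> (\<rho> i)) = p (\<alpha> i)) \<longrightarrow>
         f (ext_root n c \<alpha> (\<rho> 0)) = p (ext_root n c \<alpha> 0) \<and>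
         (\<forall>i\<in>{0..m}. \<forall>j\<in>{0..m}.
            induced_cartan a (f (ext_root n c \<alpha> (\<rho> 0))) i j
            = induced_cartan a (p (ext_root n c \<alpha> 0)) i j)))"

end

theory Submission
  imports Defs
begin

text \<open>
  With \<open>c\<^sub>0 = 1\<close>, the extended roots satisfy the single linear relation
  \<open>\<Sum>\<^sub>j c\<^sub>j \<alpha>\<^sub>j = 0\<close>, and \<open>c\<close> spans the kernel of the extended Cartan matrix. A diagram
  automorphism \<open>\<rho>\<close> maps this kernel to itself; since the kernel is a line and the entries of
  \<open>c\<close> have nonzero sum, \<open>c \<circ> \<rho> = c\<close>. Hence \<open>\<rho>\<close> permutes the relation into itself, and
  applying \<open>\<pi>\<^sup>\<rho>\<close> to it expresses \<open>\<pi>\<^sup>\<rho>(\<alpha>\<^bsub>\<rho>(0)\<^esub>)\<close> by the same combination of the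
  \<open>\<pi>(\<alpha>\<^sub>i)\<close> as \<open>\<pi>(\<alpha>\<^sub>0)\<close>. As every \<open>c\<^sub>j\<close> is nonzero, dropping any one vector from the
  extended family leaves a basis, so \<open>\<pi>\<^sup>\<rho>\<close> is well defined.
\<close>

definition ext_coef :: "(nat \<Rightarrow> real) \<Rightarrow> nat \<Rightarrow> real" where
  "ext_coef c i = (if i = 0 then 1 else c i)"

lemma sum_atLeast0_atMost_eq:
  fixes g :: "nat \<Rightarrow> 'x::comm_monoid_add"
  shows "(\<Sum>j=0..n. g j) = g 0 + (\<Sum>j=1..n. g j)"
  using sum.atLeast_Suc_atMost[of 0 n g] by simp

lemma sum_ext_coef_ext_root: "(\<Sum>j=0..n. ext_coef c j *\<^sub>R ext_root n c \<alpha> j) = 0"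
proof -
  have "(\<Sum>j=1..n. ext_coef c j *\<^sub>R ext_root n c \<alpha> j) = (\<Sum>j=1..n. c j *\<^sub>R \<alpha> j)"
    by (rule sum.cong) (auto simp: ext_coef_def ext_root_def)
  then show ?thesis
    unfolding sum_atLeast0_atMost_eq by (simp add: ext_coef_def ext_root_def)
qed

lemma span_ext_root_remove:
  fixes \<alpha> :: "nat \<Rightarrow> 'v::real_vector"
  assumes sp: "span (\<alpha> ` {1..n}) = UNIV" and nz: "\<forall>j\<in>{1..n}. c j \<noteq> 0"
    and k: "k \<in> {0..n}"
  shows "span (ext_root n c \<alpha> ` ({0..n} - {k})) = UNIV"
proof -
  let ?S = "ext_root n c \<alpha> ` ({0..n} - {k})"
  have \<alpha>_in_S: "\<alpha> j \<in> ?S" if "j \<in> {1..n}" "j \<noteq> k" for j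
    using that by (auto simp: ext_root_def image_iff intro!: bexI[of _ j])
  have \<alpha>k_in_span: "\<alpha> k \<in> span ?S" if k1: "k \<in> {1..n}"
  proof -
    have "ext_root n c \<alpha> 0 = - (c k *\<^sub>R \<alpha> k + (\<Sum>j\<in>{1..n}-{k}. c j *\<^sub>R \<alpha> j))"
      using k1 by (simp add: ext_root_def sum.remove)
    then have ck: "c k *\<^sub>R \<alpha> k = - ext_root n c \<alpha> 0 - (\<Sum>j\<in>{1..n}-{k}. c j *\<^sub>R \<alpha> j)"
      by simp
    have \<alpha>k: "\<alpha> k = (1 / c k) *\<^sub>R (- ext_root n c \<alpha> 0 - (\<Sum>j\<in>{1..n}-{k}. c j *\<^sub>R \<alpha> j))"
      unfolding ck[symmetric] using nz k1 by simp
    have e0: "ext_root n c \<alpha> 0 \<in> ?S"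
      using k1 by auto
    have "(\<Sum>j\<in>{1..n}-{k}. c j *\<^sub>R \<alpha> j) \<in> span ?S"
      using \<alpha>_in_S by (intro span_sum span_scale span_base) auto
    then show ?thesis
      unfolding \<alpha>k by (intro span_scale span_diff span_neg span_base[OF e0])
  qed
  have "\<alpha> j \<in> span ?S" if "j \<in> {1..n}" for j
    using that \<alpha>k_in_span \<alpha>_in_S[OF that] span_base[of "\<alpha> j" ?S] by (cases "j = k") auto
  then have "span (\<alpha> ` {1..n}) \<subseteq> span ?S"
    by (intro span_minimal subspace_span) auto
  then show ?thesis
    using sp by auto
qed

lemma independent_if_span_eq_UNIV_card_le_dim:
  fixes S :: "'v::real_vector set"
  assumes fin: "finite S" and spS: "span S = UNIV" and card: "card S \<le> dim (UNIV :: 'v set)"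
  shows "independent S"
proof -
  obtain B where B: "B \<subseteq> S" "independent B" "S \<subseteq> span B"
    by (rule maximal_independent_subset)
  have "UNIV \<subseteq> span B"
    using spS span_minimal[OF B(3) subspace_span] by simp
  then have "card B = dim (UNIV :: 'v set)"
    using basis_card_eq_dim[of B UNIV] B(2) by simp
  then have "card B = card S"
    using card card_mono[OF fin B(1)] by simp
  then have "B = S"
    using card_subset_eq[OF fin B(1)] by simp
  then show ?thesis
    using B(2) by simp
qed

lemma basis_ext_root_remove:
  fixes \<alpha> :: "nat \<Rightarrow> 'v::real_vector"
  assumes inj: "inj_on \<alpha> {1..n}" and ind: "independent (\<alpha> ` {1..n})"
    and sp: "span (\<alpha> ` {1..n}) = UNIV" and nz: "\<forall>j\<in>{1..n}. c j \<noteq> 0"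
    and k: "k \<in> {0..n}"
  shows "inj_on (ext_root n c \<alpha>) ({0..n} - {k}) \<and>
         independent (ext_root n c \<alpha> ` ({0..n} - {k})) \<and>
         span (ext_root n c \<alpha> ` ({0..n} - {k})) = UNIV"
proof -
  let ?S = "ext_root n c \<alpha> ` ({0..n} - {k})"
  have spS: "span ?S = UNIV"
    using span_ext_root_remove[OF sp nz k] .
  have "dim (UNIV :: 'v set) = dim (span (\<alpha> ` {1..n}))"
    by (simp only: sp)
  also have "\<dots> = dim (\<alpha> ` {1..n})"
    by (rule dim_span)
  also have "\<dots> = n"
    using dim_eq_card_independent[OF ind] card_image[OF inj] by simp
  finally have dimU: "dim (UNIV :: 'v set) = n" .
  have "card ?S \<le> n"
    using card_image_le[of "{0..n} - {k}" "ext_root n c \<alpha>"] k by simp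
  then have indS: "independent ?S"
    using spS dimU by (intro independent_if_span_eq_UNIV_card_le_dim) auto
  have "card ?S = dim ?S"
    by (rule dim_eq_card_independent[OF indS, symmetric])
  also have "\<dots> = dim (span ?S)"
    by (rule dim_span[symmetric])
  also have "\<dots> = n"
    using dimU by (simp only: spS)
  finally have "card ?S = n" .
  then have "inj_on (ext_root n c \<alpha>) ({0..n} - {k})"
    using k by (intro eq_card_imp_inj_on) auto
  then show ?thesis
    using indS spS by blast
qed

lemma twisted_image_ext_root_0:
  fixes \<alpha> :: "nat \<Rightarrow> 'v::real_vector"
  assumes lp: "linear p" and lf: "linear f"
    and bij: "bij_betw \<rho> {0..n} {0..n}"
    and inv: "\<forall>i\<in>{0..n}. ext_coef c (\<rho> i) = ext_coef c i"
    and fp: "\<forall>i\<in>{1..n}. f (ext_root n c \<alpha> (\<rho> i)) = p (\<alpha> i)"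
  shows "f (ext_root n c \<alpha> (\<rho> 0)) = p (ext_root n c \<alpha> 0)"
proof -
  let ?e = "ext_root n c \<alpha>"
  have "0 = f (\<Sum>j=0..n. ext_coef c j *\<^sub>R ?e j)"
    by (simp add: sum_ext_coef_ext_root linear_0[OF lf])
  also have "\<dots> = (\<Sum>j=0..n. ext_coef c j *\<^sub>R f (?e j))"
    by (simp add: linear_sum[OF lf] linear_scale[OF lf])
  also have "\<dots> = (\<Sum>i=0..n. ext_coef c (\<rho> i) *\<^sub>R f (?e (\<rho> i)))"
    by (rule sum.reindex_bij_betw[OF bij, symmetric])
  also have "\<dots> = (\<Sum>i=0..n. ext_coef c i *\<^sub>R f (?e (\<rho> i)))"
    using inv by (intro sum.cong) auto
  also have "\<dots> = f (?e (\<rho> 0)) + (\<Sum>i=1..n. c i *\<^sub>R p (\<alpha> i))"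
    unfolding sum_atLeast0_atMost_eq using fp by (simp add: ext_coef_def)
  finally have "f (?e (\<rho> 0)) = - (\<Sum>i=1..n. c i *\<^sub>R p (\<alpha> i))"
    by (simp add: eq_neg_iff_add_eq_0)
  also have "\<dots> = p (?e 0)"
    by (simp add: ext_root_def linear_neg[OF lp] linear_sum[OF lp] linear_scale[OF lp])
  finally show ?thesis .
qed

lemma twist_claimI:
  fixes \<alpha> :: "nat \<Rightarrow> 'v::real_vector" and a :: "nat \<Rightarrow> 'w::real_inner"
  assumes inj: "inj_on \<alpha> {1..n}" and ind: "independent (\<alpha> ` {1..n})"
    and sp: "span (\<alpha> ` {1..n}) = UNIV" and nz: "\<forall>j\<in>{1..n}. c j \<noteq> 0"
    and inv: "\<And>\<rho>. dynkin_aut n A \<rho> \<Longrightarrow> \<forall>i\<in>{0..n}. ext_coef c (\<rho> i) = ext_coef c i"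
  shows "twist_claim n A c \<alpha> img m a"
  unfolding twist_claim_def
proof (intro allI impI conjI)
  fix \<rho> assume aut: "dynkin_aut n A \<rho>"
  let ?e = "ext_root n c \<alpha>"
  have bij: "bij_betw \<rho> {0..n} {0..n}"
    using aut by (simp add: dynkin_aut_def)
  then have \<rho>0: "\<rho> 0 \<in> {0..n}" and inj\<rho>: "inj_on \<rho> {1..n}"
    by (auto simp: bij_betw_def intro: inj_on_subset[of _ "{0..n}"])
  have "\<rho> ` {1..n} = \<rho> ` ({0..n} - {0})"
    by (rule arg_cong[where f = "image \<rho>"]) auto
  also have "\<dots> = {0..n} - {\<rho> 0}"
    using bij inj_on_image_set_diff[of \<rho> "{0..n}" "{0..n}" "{0}"] by (auto simp: bij_betw_def)
  finally have image_\<rho>: "\<rho> ` {1..n} = {0..n} - {\<rho> 0}" .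
  then have image_e_\<rho>: "(?e \<circ> \<rho>) ` {1..n} = ?e ` ({0..n} - {\<rho> 0})"
    by (simp only: image_comp[symmetric])
  note basis = basis_ext_root_remove[OF inj ind sp nz \<rho>0]
  show "inj_on (?e \<circ> \<rho>) {1..n}"
    using basis image_\<rho> by (intro comp_inj_on[OF inj\<rho>]) simp
  show "independent ((?e \<circ> \<rho>) ` {1..n})" "span ((?e \<circ> \<rho>) ` {1..n}) = UNIV"
    unfolding image_e_\<rho> using basis by blast+
  fix p f
  assume "linear p \<and> (\<forall>i\<in>{1..n}. p (\<alpha> i) = img i) \<and>
          linear f \<and> (\<forall>i\<in>{1..n}. f (?e (\<rho> i)) = p (\<alpha> i))"
  then show eq: "f (?e (\<rho> 0)) = p (?e 0)"
    using twisted_image_ext_root_0[OF _ _ bij inv[OF aut]] by blast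
  show "\<forall>i\<in>{0..m}. \<forall>j\<in>{0..m}.
          induced_cartan a (f (?e (\<rho> 0))) i j = induced_cartan a (p (?e 0)) i j"
    by (simp add: eq)
qed

definition cartan_null :: "nat \<Rightarrow> (nat \<Rightarrow> nat \<Rightarrow> real) \<Rightarrow> (nat \<Rightarrow> real) \<Rightarrow> bool" where
  "cartan_null n A y \<longleftrightarrow> (\<forall>i\<in>{0..n}. (\<Sum>j=0..n. A i j * y j) = 0)"

lemma cartan_null_comp_dynkin_aut:
  assumes aut: "dynkin_aut n A \<rho>" and null: "cartan_null n A x"
  shows "cartan_null n A (x \<circ> \<rho>)"
  unfolding cartan_null_def
proof
  fix i assume i: "i \<in> {0..n}"
  have bij: "bij_betw \<rho> {0..n} {0..n}"
    and pres: "\<forall>i\<in>{0..n}. \<forall>j\<in>{0..n}. A (\<rho> i) (\<rho> j) = A i j"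
    using aut by (auto simp: dynkin_aut_def)
  have "(\<Sum>j=0..n. A i j * (x \<circ> \<rho>) j) = (\<Sum>j=0..n. A (\<rho> i) (\<rho> j) * x (\<rho> j))"
    using pres i by (intro sum.cong) auto
  also have "\<dots> = (\<Sum>j=0..n. A (\<rho> i) j * x j)"
    by (rule sum.reindex_bij_betw[OF bij])
  also have "\<dots> = 0"
    using null i bij by (auto simp: cartan_null_def bij_betw_def)
  finally show "(\<Sum>j=0..n. A i j * (x \<circ> \<rho>) j) = 0" .
qed

lemma dynkin_aut_fixes_null_vector:
  assumes aut: "dynkin_aut n A \<rho>"
    and null_iff: "\<And>y. cartan_null n A y \<longleftrightarrow> (\<forall>i\<in>{0..n}. y i = y 0 * x i)"
    and x0: "x 0 = 1" and sum_nz: "(\<Sum>j=0..n. x j) \<noteq> 0"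
  shows "\<forall>i\<in>{0..n}. x (\<rho> i) = x i"
proof -
  have bij: "bij_betw \<rho> {0..n} {0..n}"
    using aut by (simp add: dynkin_aut_def)
  have "cartan_null n A x"
    unfolding null_iff x0 by simp
  then have "cartan_null n A (x \<circ> \<rho>)"
    by (rule cartan_null_comp_dynkin_aut[OF aut])
  then have scaled: "\<forall>i\<in>{0..n}. x (\<rho> i) = x (\<rho> 0) * x i"
    unfolding null_iff comp_apply .
  have "(\<Sum>j=0..n. x j) = (\<Sum>j=0..n. x (\<rho> j))"
    using sum.reindex_bij_betw[OF bij, of x] by simp
  also have "\<dots> = (\<Sum>j=0..n. x (\<rho> 0) * x j)"
    by (rule sum.cong[OF refl]) (use scaled in blast)
  also have "\<dots> = x (\<rho> 0) * (\<Sum>j=0..n. x j)"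
    by (rule sum_distrib_left[symmetric])
  finally have \<rho>0: "x (\<rho> 0) = 1"
    using sum_nz by simp
  show ?thesis
    using scaled unfolding \<rho>0 by simp
qed

lemma atLeastAtMost_0_6: "{0..6::nat} = {0, 1, 2, 3, 4, 5, 6}"
  by auto

lemma sum_atLeastAtMost_0_6: "(\<Sum>j=0..6::nat. g j) = g 0 + g 1 + g 2 + g 3 + g 4 + g 5 + g 6"
  by (simp add: eval_nat_numeral atLeast0_atMost_Suc ac_simps)

lemma cartan_null_D6_eq_iff:
  "cartan_null 6 cartan_D6_eq y \<longleftrightarrow> (\<forall>i\<in>{0..6}. y i = y 0 * ext_coef coef_D6_eq i)"
  unfolding cartan_null_def atLeastAtMost_0_6 sum_atLeastAtMost_0_6
  by (simp add: cartan_D6_eq_def sl_cartan_def edgeD6_def ext_coef_def coef_D6_eq_def) linarith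

lemma cartan_null_D6_lt_iff:
  "cartan_null 6 cartan_D6_lt y \<longleftrightarrow> (\<forall>i\<in>{0..6}. y i = y 0 * ext_coef coef_D6_lt i)"
  unfolding cartan_null_def atLeastAtMost_0_6 sum_atLeastAtMost_0_6
  by (simp add: cartan_D6_lt_def sl_cartan_def edgeD6_def ext_coef_def coef_D6_lt_def) linarith

lemma cartan_null_D6_gt_iff:
  "cartan_null 6 cartan_D6_gt y \<longleftrightarrow> (\<forall>i\<in>{0..6}. y i = y 0 * ext_coef coef_D6_gt i)"
  unfolding cartan_null_def atLeastAtMost_0_6 sum_atLeastAtMost_0_6
  by (simp add: cartan_D6_gt_def sl_cartan_def edgeD6_def ext_coef_def coef_D6_gt_def) linarith

lemma dynkin_aut_fixes_ext_coef_A4_eq: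
  assumes "dynkin_aut 4 cartan_A4_eq \<rho>"
  shows "\<forall>i\<in>{0..4}. ext_coef coef_A4_eq (\<rho> i) = ext_coef coef_A4_eq i"
proof -
  have "\<rho> i \<in> {0..4}" if "i \<in> {0..4}" for i
    using assms that by (auto simp: dynkin_aut_def bij_betw_def)
  then show ?thesis
    by (auto simp: ext_coef_def coef_A4_eq_def)
qed

lemma twist_claim_of_cartan_null_iff:
  fixes \<alpha> :: "nat \<Rightarrow> 'v::real_vector" and a :: "nat \<Rightarrow> 'w::real_inner"
  assumes "inj_on \<alpha> {1..n}" "independent (\<alpha> ` {1..n})" "span (\<alpha> ` {1..n}) = UNIV"
    and "\<forall>j\<in>{1..n}. c j \<noteq> 0"
    and "\<And>y. cartan_null n A y \<longleftrightarrow> (\<forall>i\<in>{0..n}. y i = y 0 * ext_coef c i)"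
    and "(\<Sum>j=0..n. ext_coef c j) \<noteq> 0"
  shows "twist_claim n A c \<alpha> img m a"
proof (rule twist_claimI[OF assms(1-4)])
  fix \<rho> assume "dynkin_aut n A \<rho>"
  then show "\<forall>i\<in>{0..n}. ext_coef c (\<rho> i) = ext_coef c i"
    by (rule dynkin_aut_fixes_null_vector[OF _ assms(5) _ assms(6)]) (simp add: ext_coef_def)
qed

theorem mainTheorem2:
  fixes \<alpha> :: "nat \<Rightarrow> 'v::real_vector"   \<comment> \<open>basis of V_4\<close>
    and \<beta> :: "nat \<Rightarrow> 'u::real_vector"   \<comment> \<open>basis of V_6\<close>
    and a ab :: "nat \<Rightarrow> real^3"          \<comment> \<open>H_3 roots a_i and bar a_i\<close>
    and h hb :: "nat \<Rightarrow> real^2"          \<comment> \<open>H_2 roots a_i and bar a_i\<close>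
  assumes "inj_on \<alpha> {1..4}" "independent (\<alpha> ` {1..4})" "span (\<alpha> ` {1..4}) = UNIV"
    and "inj_on \<beta> {1..6}" "independent (\<beta> ` {1..6})" "span (\<beta> ` {1..6}) = UNIV"
    and "\<forall>i\<in>{1..3}. inner (a i) (a i) = 1" "inner (a 1) (a 2) = -1/2"
        "inner (a 2) (a 3) = - tau / 2" "inner (a 1) (a 3) = 0"
    and "\<forall>i\<in>{1..3}. inner (ab i) (ab i) = 1" "inner (ab 1) (ab 2) = -1/2"
        "inner (ab 2) (ab 3) = - sig / 2" "inner (ab 1) (ab 3) = 0"
    and "\<forall>i\<in>{1..2}. inner (h i) (h i) = 1" "inner (h 1) (h 2) = - tau / 2"
    and "\<forall>i\<in>{1..2}. inner (hb i) (hb i) = 1" "inner (hb 1) (hb 2) = - sig / 2"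
  shows
    "twist_claim 4 cartan_A4_eq coef_A4_eq \<alpha> (img_A4 tau h) 2 h \<and>
     twist_claim 4 cartan_A4_eq coef_A4_eq \<alpha> (img_A4 sig hb) 2 hb \<and>
     twist_claim 6 cartan_D6_gt coef_D6_gt \<beta> (img_D6 tau a) 3 a \<and>
     twist_claim 6 cartan_D6_gt coef_D6_gt \<beta> (img_D6 sig ab) 3 ab \<and>
     twist_claim 6 cartan_D6_eq coef_D6_eq \<beta> (img_D6 tau a) 3 a \<and>
     twist_claim 6 cartan_D6_eq coef_D6_eq \<beta> (img_D6 sig ab) 3 ab \<and>
     twist_claim 6 cartan_D6_lt coef_D6_lt \<beta> (img_D6 tau a) 3 a \<and>
     twist_claim 6 cartan_D6_lt coef_D6_lt \<beta> (img_D6 sig ab) 3 ab"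
proof -
  have A4: "twist_claim 4 cartan_A4_eq coef_A4_eq \<alpha> img 2 b" for img and b :: "nat \<Rightarrow> real^2"
    by (rule twist_claimI[OF assms(1-3) _ dynkin_aut_fixes_ext_coef_A4_eq])
       (auto simp: coef_A4_eq_def)
  have D6_eq: "twist_claim 6 cartan_D6_eq coef_D6_eq \<beta> img 3 b" for img and b :: "nat \<Rightarrow> real^3"
    by (rule twist_claim_of_cartan_null_iff[OF assms(4-6) _ cartan_null_D6_eq_iff])
       (auto simp: coef_D6_eq_def ext_coef_def sum_atLeastAtMost_0_6)
  have D6_lt: "twist_claim 6 cartan_D6_lt coef_D6_lt \<beta> img 3 b" for img and b :: "nat \<Rightarrow> real^3"
    by (rule twist_claim_of_cartan_null_iff[OF assms(4-6) _ cartan_null_D6_lt_iff])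
       (auto simp: coef_D6_lt_def ext_coef_def sum_atLeastAtMost_0_6)
  have D6_gt: "twist_claim 6 cartan_D6_gt coef_D6_gt \<beta> img 3 b" for img and b :: "nat \<Rightarrow> real^3"
    by (rule twist_claim_of_cartan_null_iff[OF assms(4-6) _ cartan_null_D6_gt_iff])
       (auto simp: coef_D6_gt_def ext_coef_def sum_atLeastAtMost_0_6)
  show ?thesis
    by (intro conjI A4 D6_eq D6_lt D6_gt)
qed

end
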